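(* Let $p \ge 2$, let $X \in L^p$ be a real valued random variable, and let $0 < r \le 2 \le s \le p$. Then $$\operatorname{Var}(X_+^{r/2})^{2/r} + \operatorname{Var}(X_-^{r/2})^{2/r} \le \operatorname{Var}(X) \le 2\left(\operatorname{Var}(X_+^{s/2})^{2/s} + \operatorname{Var}(X_-^{s/2})^{2/s}\right).$$
   Context: $X_+ = \max\{X,0\}$ and $X_- = -\min\{X,0\}$ are the positive and negative parts of $X$; $\operatorname{Var}(Y) = E(Y^2)-(EY)^2$. *)

theory Defs
  imports "HOL-Probability.Probability"
begin

definition pos_part :: "('a \<Rightarrow> real) \<Rightarrow> 'a \<Rightarrow> real" where
  "pos_part X = (\<lambda>\<omega>. max (X \<omega>) 0)"

definition neg_part :: "('a \<Rightarrow> real) \<Rightarrow> 'a \<Rightarrow> real" where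
  "neg_part X = (\<lambda>\<omega>. - min (X \<omega>) 0)"

definition Var :: "'a measure \<Rightarrow> ('a \<Rightarrow> real) \<Rightarrow> real" where
  "Var M Y = (\<integral>\<omega>. (Y \<omega>)^2 \<partial>M) - (\<integral>\<omega>. Y \<omega> \<partial>M)^2"

end

theory Submission
  imports Defs
begin

text \<open>
  For \<open>Y \<ge> 0\<close> and \<open>0 < a \<le> 1\<close> the map \<open>t \<mapsto> t\<^sup>a\<close> is subadditive and concave. Hence
  \<open>(Y\<^sup>a - m\<^sup>a)\<^sup>2 \<le> ((Y - m)\<^sup>2)\<^sup>a\<close> with \<open>m = E Y\<close>, and Jensen's inequality gives
  \<open>Var(Y\<^sup>a) \<le> E (Y\<^sup>a - m\<^sup>a)\<^sup>2 \<le> (Var Y)\<^sup>a\<close>. For \<open>a \<ge> 1\<close> all these inequalities reverse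
  when \<open>Y\<close> is centred at \<open>c = (E Y\<^sup>a)\<^bsup>1/a\<^esup>\<close> instead of at its mean, so \<open>(Var Y)\<^sup>a \<le> Var(Y\<^sup>a)\<close>.
  Applied to \<open>X\<^sub>+\<close> and \<open>X\<^sub>-\<close>, it remains to compare \<open>Var X\<close> with \<open>Var X\<^sub>+ + Var X\<^sub>-\<close>:
  since \<open>X\<^sub>+ X\<^sub>- = 0\<close>, we have \<open>Var X = Var X\<^sub>+ + Var X\<^sub>- + 2 E X\<^sub>+ E X\<^sub>-\<close> and
  \<open>0 \<le> Var \<bar>X\<bar> = Var X\<^sub>+ + Var X\<^sub>- - 2 E X\<^sub>+ E X\<^sub>-\<close>.
\<close>

lemma powr_add_le_add_powr:
  fixes u v a :: real
  assumes "0 \<le> u" "0 \<le> v" "0 < a" "a \<le> 1"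
  shows "(u + v) powr a \<le> u powr a + v powr a"
proof (cases "u + v = 0")
  case True
  then show ?thesis using assms by simp
next
  case False
  define t where "t = u + v"
  have t: "0 < t" using False assms t_def by auto
  have "u / t \<le> (u / t) powr a" "v / t \<le> (v / t) powr a"
    using powr_mono'[of a 1] assms t t_def by (simp_all add: divide_le_eq_1)
  moreover have "u / t + v / t = 1" using t t_def by (simp add: add_divide_distrib[symmetric])
  ultimately have "t powr a * 1 \<le> t powr a * ((u / t) powr a + (v / t) powr a)"
    by (intro mult_left_mono) auto
  also have "\<dots> = u powr a + v powr a"
    using t assms by (simp add: powr_divide distrib_left)
  finally show ?thesis using t_def by simp
qed

lemma add_powr_le_powr_add:
  fixes u v a :: real
  assumes "0 \<le> u" "0 \<le> v" "1 \<le> a"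
  shows "u powr a + v powr a \<le> (u + v) powr a"
proof (cases "u + v = 0")
  case True
  then show ?thesis using assms by (simp add: add_nonneg_eq_0_iff)
next
  case False
  define t where "t = u + v"
  have t: "0 < t" using False assms t_def by auto
  have "(u / t) powr a \<le> u / t" "(v / t) powr a \<le> v / t"
    using powr_mono'[of 1 a] assms t t_def by (simp_all add: divide_le_eq_1)
  moreover have "u / t + v / t = 1" using t t_def by (simp add: add_divide_distrib[symmetric])
  ultimately have "t powr a * ((u / t) powr a + (v / t) powr a) \<le> t powr a * 1"
    by (intro mult_left_mono) auto
  also have "t powr a * ((u / t) powr a + (v / t) powr a) = u powr a + v powr a"
    using t assms by (simp add: powr_divide distrib_left)
  finally show ?thesis using t_def by simp
qed

lemma abs_powr_diff_le:
  fixes x y a :: real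
  assumes "0 \<le> x" "0 \<le> y" "0 < a" "a \<le> 1"
  shows "\<bar>x powr a - y powr a\<bar> \<le> \<bar>x - y\<bar> powr a"
proof -
  have "\<bar>x powr a - y powr a\<bar> \<le> \<bar>x - y\<bar> powr a" if "0 \<le> y" "y \<le> x" for x y
    using powr_add_le_add_powr[of "x - y" y a] powr_mono2[of a y x] that assms by simp
  from this[of y x] this[of x y] show ?thesis
    using assms by (cases "y \<le> x") (simp_all add: abs_minus_commute)
qed

lemma abs_diff_powr_le:
  fixes x y a :: real
  assumes "0 \<le> x" "0 \<le> y" "1 \<le> a"
  shows "\<bar>x - y\<bar> powr a \<le> \<bar>x powr a - y powr a\<bar>"
proof -
  have "\<bar>x - y\<bar> powr a \<le> \<bar>x powr a - y powr a\<bar>" if "0 \<le> y" "y \<le> x" for x y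
    using add_powr_le_powr_add[of "x - y" y a] powr_mono2[of a y x] that assms by simp
  from this[of y x] this[of x y] show ?thesis
    using assms by (cases "y \<le> x") (simp_all add: abs_minus_commute)
qed

lemma powr_le_tangent:
  fixes x m a :: real
  assumes "0 \<le> x" "0 < m" "0 < a" "a \<le> 1"
  shows "x powr a \<le> m powr a + a * m powr (a - 1) * (x - m)"
proof -
  have "(x / m) powr a \<le> a * (x / m) + (1 - a)"
    using Youngs_inequality_0[of a "1 - a" "x / m" 1] assms by (cases "x = 0") simp_all
  then have "m powr a * (x / m) powr a \<le> m powr a * (a * (x / m) + (1 - a))"
    by (intro mult_left_mono) auto
  then show ?thesis using assms by (simp add: powr_divide powr_diff field_simps)
qed

lemma tangent_le_powr:
  fixes x m a :: real
  assumes "0 \<le> x" "0 < m" "1 \<le> a"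
  shows "m powr a + a * m powr (a - 1) * (x - m) \<le> x powr a"
proof -
  define z where "z = x / m"
  define y where "y = z powr a"
  have "z = y powr (1 / a)" using assms y_def z_def by (simp add: powr_powr)
  also have "\<dots> \<le> 1 / a * y + (1 - 1 / a)"
    using Youngs_inequality_0[of "1 / a" "1 - 1 / a" y 1] assms y_def by (cases "y = 0") simp_all
  finally have "a * z \<le> a * (1 / a * y + (1 - 1 / a))"
    using assms by (intro mult_left_mono) auto
  also have "\<dots> = y + a - 1" using assms by (simp add: field_simps)
  finally have "1 + a * (x / m - 1) \<le> (x / m) powr a"
    unfolding y_def z_def[symmetric] by (simp add: algebra_simps)
  then have "m powr a * (1 + a * (x / m - 1)) \<le> m powr a * (x / m) powr a"
    by (intro mult_left_mono) auto
  then show ?thesis using assms by (simp add: powr_divide powr_diff field_simps)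
qed

lemma powr_le_one_plus_powr:
  fixes x q p :: real
  assumes "0 \<le> x" "0 \<le> q" "q \<le> p"
  shows "x powr q \<le> 1 + x powr p"
proof (cases "x \<le> 1")
  case True
  then show ?thesis using powr_le1[of q x] assms by (simp add: add_increasing2)
next
  case False
  then have "x powr q \<le> x powr p" using assms by (intro powr_mono) auto
  then show ?thesis by simp
qed

lemma power2_powr_eq_abs_powr: "((t::real)^2) powr a = \<bar>t\<bar> powr (2 * a)"
  by (metis abs_ge_zero power2_abs powr_numeral powr_powr)

lemma power2_powr: "((y::real) powr a)^2 = y powr (2 * a)"
  by (simp add: power2_eq_square powr_add[symmetric])

lemma pos_part_nonneg: "0 \<le> pos_part X \<omega>"
  by (simp add: pos_part_def)

lemma neg_part_nonneg: "0 \<le> neg_part X \<omega>"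
  by (simp add: neg_part_def)

lemma abs_pos_part_le: "\<bar>pos_part X \<omega>\<bar> \<le> \<bar>X \<omega>\<bar>"
  by (simp add: pos_part_def)

lemma abs_neg_part_le: "\<bar>neg_part X \<omega>\<bar> \<le> \<bar>X \<omega>\<bar>"
  by (simp add: neg_part_def)

lemma borel_measurable_pos_part [measurable]:
  "X \<in> borel_measurable M \<Longrightarrow> pos_part X \<in> borel_measurable M"
  unfolding pos_part_def by measurable

lemma borel_measurable_neg_part [measurable]:
  "X \<in> borel_measurable M \<Longrightarrow> neg_part X \<in> borel_measurable M"
  unfolding neg_part_def by measurable

context finite_measure
begin

lemma integrable_le_const_plus:
  fixes f g :: "'a \<Rightarrow> real"
  assumes "f \<in> borel_measurable M" "integrable M g"
    and "\<And>\<omega>. \<omega> \<in> space M \<Longrightarrow> \<bar>f \<omega>\<bar> \<le> C + g \<omega>"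
  shows "integrable M f"
proof (rule Bochner_Integration.integrable_bound[where f="\<lambda>\<omega>. C + g \<omega>"])
  show "AE \<omega> in M. norm (f \<omega>) \<le> norm (C + g \<omega>)"
    using assms(3) by (intro AE_I2) force
qed (use assms in auto)

lemma integrable_abs_powr_dominated:
  fixes X f :: "'a \<Rightarrow> real"
  assumes "integrable M (\<lambda>\<omega>. \<bar>X \<omega>\<bar> powr p)" "f \<in> borel_measurable M"
    and "\<And>\<omega>. \<omega> \<in> space M \<Longrightarrow> \<bar>f \<omega>\<bar> \<le> \<bar>X \<omega>\<bar>" "0 \<le> q" "q \<le> p"
  shows "integrable M (\<lambda>\<omega>. \<bar>f \<omega>\<bar> powr q)"
proof (rule integrable_le_const_plus[OF _ assms(1), of _ 1])
  fix \<omega> assume "\<omega> \<in> space M"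
  then have "\<bar>f \<omega>\<bar> powr q \<le> \<bar>X \<omega>\<bar> powr q"
    using assms(3,4) by (intro powr_mono2) auto
  then show "\<bar>\<bar>f \<omega>\<bar> powr q\<bar> \<le> 1 + \<bar>X \<omega>\<bar> powr p"
    using powr_le_one_plus_powr[of "\<bar>X \<omega>\<bar>" q p] assms(4,5) by simp
qed (use assms(2) in measurable)

lemma integrable_sq_diff:
  fixes W :: "'a \<Rightarrow> real"
  assumes "integrable M W" "integrable M (\<lambda>\<omega>. (W \<omega>)^2)"
  shows "integrable M (\<lambda>\<omega>. (W \<omega> - c)^2)"
  using assms by (simp add: power2_diff)

end

context prob_space
begin

lemma Var_eq_integral_sq_diff:
  fixes W :: "'a \<Rightarrow> real"
  assumes "integrable M W" "integrable M (\<lambda>\<omega>. (W \<omega>)^2)"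
  shows "Var M W = (\<integral>\<omega>. (W \<omega> - c)^2 \<partial>M) - (expectation W - c)^2"
proof -
  have "(\<integral>\<omega>. (W \<omega> - c)^2 \<partial>M) = (\<integral>\<omega>. ((W \<omega>)^2 - 2 * c * W \<omega>) + c^2 \<partial>M)"
    by (intro Bochner_Integration.integral_cong) (auto simp: power2_eq_square algebra_simps)
  also have "\<dots> = (\<integral>\<omega>. (W \<omega>)^2 \<partial>M) - 2 * c * expectation W + c^2"
    using assms by (simp add: prob_space)
  finally show ?thesis unfolding Var_def by (simp add: power2_eq_square algebra_simps)
qed

lemma Var_eq_variance:
  fixes W :: "'a \<Rightarrow> real"
  assumes "integrable M W" "integrable M (\<lambda>\<omega>. (W \<omega>)^2)"
  shows "Var M W = variance W"
  using Var_eq_integral_sq_diff[OF assms, of "expectation W"] by simp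

lemma integral_powr_le_powr_integral:
  fixes V :: "'a \<Rightarrow> real"
  assumes "integrable M V" "integrable M (\<lambda>\<omega>. V \<omega> powr a)"
    and nonneg: "\<And>\<omega>. \<omega> \<in> space M \<Longrightarrow> 0 \<le> V \<omega>" and "0 < a" "a \<le> 1"
  shows "(\<integral>\<omega>. V \<omega> powr a \<partial>M) \<le> expectation V powr a"
proof -
  define m where "m = expectation V"
  have "0 \<le> m" using nonneg unfolding m_def by (intro Bochner_Integration.integral_nonneg) auto
  show ?thesis
  proof (cases "m = 0")
    case True
    then have "AE \<omega> in M. V \<omega> = 0"
      using integral_nonneg_eq_0_iff_AE[OF assms(1)] nonneg m_def by (auto intro: AE_I2)
    then have "AE \<omega> in M. V \<omega> powr a = 0" by eventually_elim simp
    then have "(\<integral>\<omega>. V \<omega> powr a \<partial>M) = 0"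
      using integral_cong_AE[of "\<lambda>\<omega>. V \<omega> powr a" M "\<lambda>_. 0"] assms(2) by simp
    then show ?thesis by simp
  next
    case False
    then have "0 < m" using \<open>0 \<le> m\<close> by simp
    have "(\<integral>\<omega>. V \<omega> powr a \<partial>M) \<le> (\<integral>\<omega>. m powr a + a * m powr (a - 1) * (V \<omega> - m) \<partial>M)"
      using assms powr_le_tangent[OF _ \<open>0 < m\<close>] by (intro integral_mono) auto
    also have "\<dots> = m powr a"
      using assms(1) by (simp add: prob_space m_def)
    finally show ?thesis unfolding m_def .
  qed
qed

lemma powr_integral_le_integral_powr:
  fixes V :: "'a \<Rightarrow> real"
  assumes "integrable M V" "integrable M (\<lambda>\<omega>. V \<omega> powr a)"
    and nonneg: "\<And>\<omega>. \<omega> \<in> space M \<Longrightarrow> 0 \<le> V \<omega>" and "1 \<le> a"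
  shows "expectation V powr a \<le> (\<integral>\<omega>. V \<omega> powr a \<partial>M)"
proof -
  define m where "m = expectation V"
  have "0 \<le> m" using nonneg unfolding m_def by (intro Bochner_Integration.integral_nonneg) auto
  show ?thesis
  proof (cases "m = 0")
    case True
    then show ?thesis using m_def nonneg by simp
  next
    case False
    then have "0 < m" using \<open>0 \<le> m\<close> by simp
    have "m powr a = (\<integral>\<omega>. m powr a + a * m powr (a - 1) * (V \<omega> - m) \<partial>M)"
      using assms(1) by (simp add: prob_space m_def)
    also have "\<dots> \<le> (\<integral>\<omega>. V \<omega> powr a \<partial>M)"
      using assms tangent_le_powr[OF _ \<open>0 < m\<close>] by (intro integral_mono) auto
    finally show ?thesis unfolding m_def .
  qed
qed

lemma Var_powr_root_le_Var:
  fixes Y :: "'a \<Rightarrow> real"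
  assumes [measurable]: "Y \<in> borel_measurable M"
    and nonneg: "\<And>\<omega>. \<omega> \<in> space M \<Longrightarrow> 0 \<le> Y \<omega>"
    and Y2: "integrable M (\<lambda>\<omega>. (Y \<omega>)^2)" and a: "0 < a" "a \<le> 1"
  shows "Var M (\<lambda>\<omega>. Y \<omega> powr a) powr (1 / a) \<le> Var M Y"
proof -
  define m where "m = expectation Y"
  have "0 \<le> m" using nonneg unfolding m_def by (intro Bochner_Integration.integral_nonneg) auto
  have Y: "integrable M Y" using square_integrable_imp_integrable[OF _ Y2] by simp
  have Ya: "integrable M (\<lambda>\<omega>. Y \<omega> powr a)"
    by (rule integrable_le_const_plus[OF _ Y2, of _ 1])
       (use nonneg powr_le_one_plus_powr[of _ a 2] a in auto)
  have Ya2: "integrable M (\<lambda>\<omega>. (Y \<omega> powr a)^2)"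
  proof (rule integrable_le_const_plus[OF _ Y2, of _ 1])
    fix \<omega> assume "\<omega> \<in> space M"
    then show "\<bar>(Y \<omega> powr a)^2\<bar> \<le> 1 + (Y \<omega>)^2"
      using power2_powr[of "Y \<omega>" a] powr_le_one_plus_powr[of "Y \<omega>" "2 * a" 2] nonneg a
      by simp
  qed simp
  have Ym2: "integrable M (\<lambda>\<omega>. (Y \<omega> - m)^2)" using integrable_sq_diff[OF Y Y2] .
  have Yma: "integrable M (\<lambda>\<omega>. ((Y \<omega> - m)^2) powr a)"
    by (rule integrable_le_const_plus[OF _ Ym2, of _ 1])
       (use powr_le_one_plus_powr[of _ a 1] a in auto)
  have "Var M (\<lambda>\<omega>. Y \<omega> powr a) \<le> (\<integral>\<omega>. (Y \<omega> powr a - m powr a)^2 \<partial>M)"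
    using Var_eq_integral_sq_diff[OF Ya Ya2, of "m powr a"] by simp
  also have "\<dots> \<le> (\<integral>\<omega>. ((Y \<omega> - m)^2) powr a \<partial>M)"
  proof (rule integral_mono[OF integrable_sq_diff[OF Ya Ya2] Yma])
    fix \<omega> assume "\<omega> \<in> space M"
    then have "\<bar>Y \<omega> powr a - m powr a\<bar> \<le> \<bar>Y \<omega> - m\<bar> powr a"
      using nonneg \<open>0 \<le> m\<close> a by (intro abs_powr_diff_le) auto
    then have "\<bar>Y \<omega> powr a - m powr a\<bar>^2 \<le> (\<bar>Y \<omega> - m\<bar> powr a)^2"
      by (intro power_mono) auto
    then show "(Y \<omega> powr a - m powr a)^2 \<le> ((Y \<omega> - m)^2) powr a"
      by (simp add: power2_powr_eq_abs_powr power2_powr)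
  qed
  also have "\<dots> \<le> (\<integral>\<omega>. (Y \<omega> - m)^2 \<partial>M) powr a"
    using a by (intro integral_powr_le_powr_integral[OF Ym2 Yma]) auto
  also have "\<dots> = Var M Y powr a"
    using Var_eq_variance[OF Y Y2] m_def by simp
  finally have "Var M (\<lambda>\<omega>. Y \<omega> powr a) powr (1 / a) \<le> (Var M Y powr a) powr (1 / a)"
    using Var_eq_variance[OF Ya Ya2] a by (intro powr_mono2) auto
  also have "\<dots> = Var M Y"
    using Var_eq_variance[OF Y Y2] a by (simp add: powr_powr)
  finally show ?thesis .
qed

lemma Var_le_Var_powr_root:
  fixes Y :: "'a \<Rightarrow> real"
  assumes [measurable]: "Y \<in> borel_measurable M"
    and nonneg: "\<And>\<omega>. \<omega> \<in> space M \<Longrightarrow> 0 \<le> Y \<omega>"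
    and Y2a: "integrable M (\<lambda>\<omega>. Y \<omega> powr (2 * a))" and a: "1 \<le> a"
  shows "Var M Y \<le> Var M (\<lambda>\<omega>. Y \<omega> powr a) powr (1 / a)"
proof -
  have dominated: "integrable M (\<lambda>\<omega>. Y \<omega> powr q)" if "0 \<le> q" "q \<le> 2 * a" for q
    by (rule integrable_le_const_plus[OF _ Y2a, of _ 1])
       (use nonneg powr_le_one_plus_powr[of _ q "2 * a"] that in auto)
  have Y: "integrable M Y" and Y2: "integrable M (\<lambda>\<omega>. (Y \<omega>)^2)"
    and Ya: "integrable M (\<lambda>\<omega>. Y \<omega> powr a)"
    using dominated[of 1] dominated[of 2] dominated[of a] a
    by (simp_all add: nonneg cong: Bochner_Integration.integrable_cong)
  have Ya2: "integrable M (\<lambda>\<omega>. (Y \<omega> powr a)^2)"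
    using Y2a by (simp add: power2_powr)
  define \<mu> where "\<mu> = expectation (\<lambda>\<omega>. Y \<omega> powr a)"
  \<comment> \<open>centring at \<open>c\<close> with \<open>c\<^sup>a = E Y\<^sup>a\<close> makes the last integral below exactly \<open>Var(Y\<^sup>a)\<close>\<close>
  define c where "c = \<mu> powr (1 / a)"
  have "0 \<le> \<mu>" unfolding \<mu>_def by (intro Bochner_Integration.integral_nonneg) auto
  then have "0 \<le> c" "c powr a = \<mu>" using a by (simp_all add: c_def powr_powr)
  have Yc2: "integrable M (\<lambda>\<omega>. (Y \<omega> - c)^2)" using integrable_sq_diff[OF Y Y2] .
  have Yca: "integrable M (\<lambda>\<omega>. ((Y \<omega> - c)^2) powr a)"
  proof (rule integrable_le_const_plus[OF _ Y2a, of _ "c powr (2 * a)"])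
    fix \<omega> assume "\<omega> \<in> space M"
    then have "\<bar>Y \<omega> - c\<bar> \<le> max (Y \<omega>) c" using nonneg[of \<omega>] \<open>0 \<le> c\<close> by (simp add: abs_le_iff max_def)
    then have "\<bar>Y \<omega> - c\<bar> powr (2 * a) \<le> max (Y \<omega>) c powr (2 * a)"
      using a by (intro powr_mono2) auto
    also have "\<dots> \<le> c powr (2 * a) + Y \<omega> powr (2 * a)" by (simp add: max_def)
    finally show "\<bar>((Y \<omega> - c)^2) powr a\<bar> \<le> c powr (2 * a) + Y \<omega> powr (2 * a)"
      by (simp add: power2_powr_eq_abs_powr)
  qed simp
  have "Var M Y powr a \<le> (\<integral>\<omega>. (Y \<omega> - c)^2 \<partial>M) powr a"
    using Var_eq_integral_sq_diff[OF Y Y2, of c] Var_eq_variance[OF Y Y2] variance_positive[of Y] a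
    by (intro powr_mono2) auto
  also have "\<dots> \<le> (\<integral>\<omega>. ((Y \<omega> - c)^2) powr a \<partial>M)"
    using a by (intro powr_integral_le_integral_powr[OF Yc2 Yca]) auto
  also have "\<dots> \<le> (\<integral>\<omega>. (Y \<omega> powr a - \<mu>)^2 \<partial>M)"
  proof (rule integral_mono[OF Yca integrable_sq_diff[OF Ya Ya2]])
    fix \<omega> assume "\<omega> \<in> space M"
    then have "\<bar>Y \<omega> - c\<bar> powr a \<le> \<bar>Y \<omega> powr a - c powr a\<bar>"
      using nonneg \<open>0 \<le> c\<close> a by (intro abs_diff_powr_le) auto
    then have "(\<bar>Y \<omega> - c\<bar> powr a)^2 \<le> \<bar>Y \<omega> powr a - c powr a\<bar>^2"
      by (intro power_mono) auto
    then show "((Y \<omega> - c)^2) powr a \<le> (Y \<omega> powr a - \<mu>)^2"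
      by (simp add: power2_powr_eq_abs_powr power2_powr \<open>c powr a = \<mu>\<close>)
  qed
  also have "\<dots> = Var M (\<lambda>\<omega>. Y \<omega> powr a)"
    using Var_eq_variance[OF Ya Ya2] \<mu>_def by simp
  finally have "(Var M Y powr a) powr (1 / a) \<le> Var M (\<lambda>\<omega>. Y \<omega> powr a) powr (1 / a)"
    using Var_eq_variance[OF Y Y2] a by (intro powr_mono2) auto
  then show ?thesis
    using Var_eq_variance[OF Y Y2] a by (simp add: powr_powr)
qed

lemma Var_pos_part_neg_part_bounds:
  fixes X :: "'a \<Rightarrow> real"
  assumes [measurable]: "X \<in> borel_measurable M" and X2: "integrable M (\<lambda>\<omega>. (X \<omega>)^2)"
  shows "Var M (pos_part X) + Var M (neg_part X) \<le> Var M X"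
    and "Var M X \<le> 2 * (Var M (pos_part X) + Var M (neg_part X))"
proof -
  have X: "integrable M X" using square_integrable_imp_integrable[OF _ X2] by simp
  have Y: "integrable M (pos_part X)" and Z: "integrable M (neg_part X)"
    using X by (simp_all add: pos_part_def neg_part_def)
  have Y2: "integrable M (\<lambda>\<omega>. (pos_part X \<omega>)^2)" and Z2: "integrable M (\<lambda>\<omega>. (neg_part X \<omega>)^2)"
    using abs_pos_part_le[of X] abs_neg_part_le[of X]
    by (auto intro!: integrable_le_const_plus[OF _ X2, of _ 0] simp: abs_le_square_iff)
  define EY EZ where "EY = expectation (pos_part X)" and "EZ = expectation (neg_part X)"
  have "0 \<le> EY" "0 \<le> EZ"
    unfolding EY_def EZ_def
    by (simp_all add: Bochner_Integration.integral_nonneg pos_part_nonneg neg_part_nonneg)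
  have "expectation X = expectation (\<lambda>\<omega>. pos_part X \<omega> - neg_part X \<omega>)"
    "expectation (\<lambda>\<omega>. \<bar>X \<omega>\<bar>) = expectation (\<lambda>\<omega>. pos_part X \<omega> + neg_part X \<omega>)"
    "expectation (\<lambda>\<omega>. (X \<omega>)^2)
      = expectation (\<lambda>\<omega>. (pos_part X \<omega>)^2 + (neg_part X \<omega>)^2)"
    by (auto intro!: Bochner_Integration.integral_cong simp: pos_part_def neg_part_def max_def min_def)
  then have moments: "expectation X = EY - EZ" "expectation (\<lambda>\<omega>. \<bar>X \<omega>\<bar>) = EY + EZ"
    "expectation (\<lambda>\<omega>. (X \<omega>)^2)
      = expectation (\<lambda>\<omega>. (pos_part X \<omega>)^2) + expectation (\<lambda>\<omega>. (neg_part X \<omega>)^2)"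
    using Y Z Y2 Z2 by (simp_all add: EY_def EZ_def)
  have "Var M X = Var M (pos_part X) + Var M (neg_part X) + 2 * EY * EZ"
    and "Var M (\<lambda>\<omega>. \<bar>X \<omega>\<bar>) = Var M (pos_part X) + Var M (neg_part X) - 2 * EY * EZ"
    unfolding Var_def moments power2_abs EY_def[symmetric] EZ_def[symmetric]
    by (simp_all add: power2_eq_square algebra_simps)
  moreover have "0 \<le> Var M (\<lambda>\<omega>. \<bar>X \<omega>\<bar>)"
    using Var_eq_variance[of "\<lambda>\<omega>. \<bar>X \<omega>\<bar>"] X X2 variance_positive by simp
  ultimately show "Var M (pos_part X) + Var M (neg_part X) \<le> Var M X"
    and "Var M X \<le> 2 * (Var M (pos_part X) + Var M (neg_part X))"
    using \<open>0 \<le> EY\<close> \<open>0 \<le> EZ\<close> by simp_all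
qed

lemma Var_powr_root_bounds:
  fixes X Y :: "'a \<Rightarrow> real"
  assumes X: "integrable M (\<lambda>\<omega>. \<bar>X \<omega>\<bar> powr p)"
    and [measurable]: "Y \<in> borel_measurable M"
    and nonneg: "\<And>\<omega>. 0 \<le> Y \<omega>" and dominated: "\<And>\<omega>. \<bar>Y \<omega>\<bar> \<le> \<bar>X \<omega>\<bar>"
    and "0 < r" "r \<le> 2" "2 \<le> s" "s \<le> p"
  shows "Var M (\<lambda>\<omega>. Y \<omega> powr (r/2)) powr (2/r) \<le> Var M Y"
    and "Var M Y \<le> Var M (\<lambda>\<omega>. Y \<omega> powr (s/2)) powr (2/s)"
proof -
  have "integrable M (\<lambda>\<omega>. \<bar>Y \<omega>\<bar> powr q)" if "0 \<le> q" "q \<le> p" for q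
    using integrable_abs_powr_dominated[OF X _ _ that] dominated by simp
  from this[of 2] this[of s] have "integrable M (\<lambda>\<omega>. (Y \<omega>)^2)"
    "integrable M (\<lambda>\<omega>. Y \<omega> powr (2 * (s/2)))"
    using assms by simp_all
  then show "Var M (\<lambda>\<omega>. Y \<omega> powr (r/2)) powr (2/r) \<le> Var M Y"
    and "Var M Y \<le> Var M (\<lambda>\<omega>. Y \<omega> powr (s/2)) powr (2/s)"
    using Var_powr_root_le_Var[of Y "r/2"] Var_le_Var_powr_root[of Y "s/2"] assms
    by simp_all
qed

end

theorem corollary3p3:
  fixes M :: "'a measure" and X :: "'a \<Rightarrow> real" and p r s :: real
  assumes "prob_space M"
    and "p \<ge> 2"
    and "X \<in> borel_measurable M"
    and "integrable M (\<lambda>\<omega>. \<bar>X \<omega>\<bar> powr p)"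
    and "0 < r" and "r \<le> 2" and "2 \<le> s" and "s \<le> p"
  shows "Var M (\<lambda>\<omega>. pos_part X \<omega> powr (r/2)) powr (2/r)
           + Var M (\<lambda>\<omega>. neg_part X \<omega> powr (r/2)) powr (2/r)
         \<le> Var M X \<and>
         Var M X \<le> 2 * (Var M (\<lambda>\<omega>. pos_part X \<omega> powr (s/2)) powr (2/s)
           + Var M (\<lambda>\<omega>. neg_part X \<omega> powr (s/2)) powr (2/s))"
proof -
  interpret prob_space M by fact
  note X = assms(3,4) and rs = assms(5-8)
  have X2: "integrable M (\<lambda>\<omega>. (X \<omega>)^2)"
    using integrable_abs_powr_dominated[OF X(2) X(1), of 2] assms(2) by simp
  note pos = Var_powr_root_bounds[OF X(2) borel_measurable_pos_part[OF X(1)]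
      pos_part_nonneg abs_pos_part_le rs]
  note neg = Var_powr_root_bounds[OF X(2) borel_measurable_neg_part[OF X(1)]
      neg_part_nonneg abs_neg_part_le rs]
  note parts = Var_pos_part_neg_part_bounds[OF X(1) X2]
  show ?thesis
  proof
    show "Var M (\<lambda>\<omega>. pos_part X \<omega> powr (r/2)) powr (2/r)
        + Var M (\<lambda>\<omega>. neg_part X \<omega> powr (r/2)) powr (2/r) \<le> Var M X"
      using add_mono[OF pos(1) neg(1)] parts(1) by (rule order_trans)
    show "Var M X \<le> 2 * (Var M (\<lambda>\<omega>. pos_part X \<omega> powr (s/2)) powr (2/s)
        + Var M (\<lambda>\<omega>. neg_part X \<omega> powr (s/2)) powr (2/s))"
      using parts(2) mult_left_mono[OF add_mono[OF pos(2) neg(2)], of 2] by (rule order_trans) simp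
  qed
qed

end
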